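(* Let $\bar X_n$ be the number of descendants of a node chosen uniformly at random from the inserted nodes $\{1,\dots,n\}$ of a random ordered increasing $k$-tree of size $n\ge1$. Then for $m\ge1$, \[ \mathbb{P}\{\bar X_n=m\}=\frac{\binom{m-1-\frac1{k+1}}{m-1}}{n\binom{n-\frac{k}{k+1}}{n}}\sum_{\ell=0}^{m-1}\frac{\binom{m-1}{\ell}(-1)^\ell}{(k+1)(\ell+1)+k}\left(\binom{n+\frac1{k+1}}{n}-\binom{n-\ell-2+\frac2{k+1}}{n}\right). \] As $n\to\infty$, $\bar X_n$ converges in distribution to a discrete random variable $\bar X$ with \[ \mathbb{P}\{\bar X=m\}=\frac{k}{(k+1)(m+\frac{k}{k+1})(m-\frac1{k+1})},\quad m\ge1. \]
   Context: Fix an integer $k\ge1$. An ordered increasing $k$-tree of size $n\ge0$ is built as follows. Start with the root-clique $K_0$: $k$ pairwise adjacent vertices labelled $0_1,\dots,0_k$ (the root nodes; each label $0_\ell$ has value $0$). For $j=1,\dots,n$ in turn, node $j$ is inserted by choosing a currently existing $k$-clique $K$ and attaching $j$ to it, i.e. adding edges from $j$ to all $k$ vertices of $K$; $j$ is then a child of $K$ and the vertices of $K$ are the parents of $j$. The $k$-cliques available for attachment are the root-clique and, for every previously inserted node $x$ attached to a clique $K'$, the $k$ cliques $\{x\}\cup(K'\setminus\{w\})$, $w\in K'$. The children of each $k$-clique are linearly ordered: if $K$ currently has $d^+(K)$ children, there are $d^+(K)+1$ positions at which the new child may be placed, and the choice of position is part of the structure. Thus there are $1+(k+1)(j-1)$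 ways to insert node $j$, and distinct sequences of choices give distinct trees. A random ordered increasing $k$-tree of size $n$ is one chosen uniformly among all of them; equivalently, it is produced by the process in which node $n$ is attached to the clique $K$ with probability $\frac{d^+(K)+1}{1+(k+1)(n-1)}$ (and a uniformly random position among the $d^+(K)+1$). A node $w$ is a descendant of $u$ if $w=u$ or some parent of $w$ is a descendant of $u$ (so $u$ counts as its own descendant). For real $x$ and integer $m\ge0$, $\binom{x}{m}=x(x-1)\cdots(x-m+1)/m!$, and $\binom{x}{m}=0$ for $m<0$. *)

theory Defs
  imports "HOL-Probability.Probability"
begin

text \<open>Vertices are integers: the root node 0_l (l = 1..k) is encoded as -l, inserted node j as j.  An ordered increasing k-tree of size n is encoded by the
  list of insertion choices: entry j-1 is the pair (K, p) where K is the clique node j was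
  attached to and p (0 \<le> p \<le> current number of children of K) the chosen position.\<close>

type_synonym oktree = "(int set \<times> nat) list"

definition root_clique :: "nat \<Rightarrow> int set" where
  "root_clique k = {- int k .. -1}"

definition parents :: "oktree \<Rightarrow> nat \<Rightarrow> int set" where
  "parents t x = fst (t ! (x - 1))"

definition kcliques :: "nat \<Rightarrow> oktree \<Rightarrow> int set set" where
  "kcliques k t = {root_clique k} \<union>
     {insert (int x) (parents t x - {w}) | x w. 1 \<le> x \<and> x \<le> length t \<and> w \<in> parents t x}"

definition outdeg :: "oktree \<Rightarrow> int set \<Rightarrow> nat" where
  "outdeg t K = card {x. 1 \<le> x \<and> x \<le> length t \<and> parents t x = K}"

fun oktrees :: "nat \<Rightarrow> nat \<Rightarrow> oktree set" where
  "oktrees k 0 = {[]}"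
| "oktrees k (Suc n) = {t @ [(K, p)] | t K p.
      t \<in> oktrees k n \<and> K \<in> kcliques k t \<and> p \<le> outdeg t K}"

inductive desc :: "oktree \<Rightarrow> int \<Rightarrow> int \<Rightarrow> bool" for t u where
  self: "desc t u u"
| step: "1 \<le> w \<Longrightarrow> w \<le> int (length t) \<Longrightarrow> v \<in> parents t (nat w) \<Longrightarrow> desc t u v
          \<Longrightarrow> desc t u w"

definition num_desc :: "oktree \<Rightarrow> nat \<Rightarrow> nat" where
  "num_desc t u = card {w. desc t (int u) w}"

definition Xbar :: "nat \<Rightarrow> nat \<Rightarrow> nat pmf" where
  "Xbar k n = map_pmf (\<lambda>(t, u). num_desc t u) (pmf_of_set (oktrees k n \<times> {1..n}))"

end

theory Submission
  imports Defs
begin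

(* Let desc_count k n m be the number of pairs (t, u) of a tree t of size n and a node
   u in {1..n} having exactly m descendants; then P{Xbar_n = m} = desc_count / (n * #trees).
   1. Cliques: every k-clique of a tree is a k-set, and a tree of size n has 1 + k*n of
      them, hence 1 + (k+1)*n insertions (positions among the children included).
   2. Descendants: the new node becomes a descendant of u iff its clique meets the
      descendants of u.  If u has d descendants they lie in k*d cliques having d - 1
      children in total, so exactly (k+1)*d - 1 insertions give u a new descendant.  This
      yields a linear recurrence for desc_count in n (desc_count_Suc).
   3. Closed form: mean_count, the formula of the theorem written as an alternating
      binomial sum (alt_sum) of terms qterm, satisfies the same recurrence, because qterm
      obeys a first order recurrence and the binomial weights absorb the factor j - l;
      hence desc_count = mean_count * #trees (desc_count_eq_mean_count).
   4. Limit: qterm k n l / n tends to (k+1)/((k+1)(l+1)+k); a beta-type evaluation of the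
      alternating sum gives the limiting point probabilities, which telescope to 1 and so
      form a pmf; on the naturals, pointwise convergence of the pmfs gives convergence of
      the distribution functions. *)

section \<open>The k-cliques of a tree\<close>

definition child_clique :: "oktree \<Rightarrow> nat \<times> int \<Rightarrow> int set" where
  "child_clique t xw = insert (int (fst xw)) (parents t (fst xw) - {snd xw})"

definition clique_slots :: "oktree \<Rightarrow> (nat \<times> int) set" where
  "clique_slots t = (SIGMA x:{1..length t}. parents t x)"

lemma kcliques_slots: "kcliques k t = insert (root_clique k) (child_clique t ` clique_slots t)"
proof -
  have "{insert (int x) (parents t x - {w}) | x w. 1 \<le> x \<and> x \<le> length t \<and> w \<in> parents t x}
        = child_clique t ` clique_slots t"
    unfolding child_clique_def clique_slots_def image_def by force
  thus ?thesis unfolding kcliques_def by simp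
qed

lemma parents_append: "1 \<le> x \<Longrightarrow> x \<le> length t \<Longrightarrow> parents (t @ [e]) x = parents t x"
  by (simp add: parents_def nth_append less_eq_Suc_le)

lemma parents_last: "parents (t @ [e]) (Suc (length t)) = fst e"
  by (simp add: parents_def)

lemma clique_slots_append: "clique_slots (t @ [e]) = clique_slots t \<union> {Suc (length t)} \<times> fst e"
proof -
  have "{1..length (t @ [e])} = {1..length t} \<union> {Suc (length t)}" by auto
  hence "clique_slots (t @ [e]) = (SIGMA x:{1..length t}. parents (t @ [e]) x)
                                  \<union> (SIGMA x:{Suc (length t)}. parents (t @ [e]) x)"
    unfolding clique_slots_def by auto
  also have "(SIGMA x:{1..length t}. parents (t @ [e]) x) = clique_slots t"
    unfolding clique_slots_def using parents_append by (intro Sigma_cong) auto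
  finally show ?thesis using parents_last[of t e] by auto
qed

lemma kcliques_append:
  "kcliques k (t @ [(K, p)]) = kcliques k t \<union> (\<lambda>w. insert (int (Suc (length t))) (K - {w})) ` K"
proof -
  have "child_clique (t @ [(K, p)]) ` clique_slots t = child_clique t ` clique_slots t"
    by (intro image_cong) (auto simp: child_clique_def clique_slots_def parents_append)
  moreover have "child_clique (t @ [(K, p)]) ` ({Suc (length t)} \<times> K)
                 = (\<lambda>w. insert (int (Suc (length t))) (K - {w})) ` K"
    by (auto simp: child_clique_def parents_last image_def)
  ultimately show ?thesis unfolding kcliques_slots clique_slots_append image_Un by auto
qed

definition wf_ktree :: "nat \<Rightarrow> oktree \<Rightarrow> bool" where
  "wf_ktree k t \<longleftrightarrow>
     (\<forall>K\<in>kcliques k t. finite K \<and> card K = k \<and> (\<forall>v\<in>K. v \<le> int (length t))) \<and>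
     (\<forall>x. 1 \<le> x \<and> x \<le> length t \<longrightarrow> parents t x \<in> kcliques k t \<and> (\<forall>v\<in>parents t x. v < int x))"

lemma wf_ktree_Nil: "wf_ktree k []"
proof -
  have "kcliques k [] = {root_clique k}" unfolding kcliques_def by simp
  thus ?thesis unfolding wf_ktree_def by (auto simp: root_clique_def)
qed

lemma swapped_clique:
  assumes K: "finite K" "card K = k" "\<forall>v\<in>K. v \<le> int n" and w: "w \<in> K"
  shows "finite (insert (int (Suc n)) (K - {w}))" "card (insert (int (Suc n)) (K - {w})) = k"
    and "\<forall>v\<in>insert (int (Suc n)) (K - {w}). v \<le> int (Suc n)"
proof -
  have "int (Suc n) \<notin> K - {w}" using K(3) by force
  moreover have "card K > 0" using K(1) w card_gt_0_iff by blast
  ultimately show "card (insert (int (Suc n)) (K - {w})) = k"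
    using K w by (simp add: card_Diff_singleton)
  show "finite (insert (int (Suc n)) (K - {w}))" using K by simp
  show "\<forall>v\<in>insert (int (Suc n)) (K - {w}). v \<le> int (Suc n)" using K(3) by force
qed

lemma wf_ktree_append:
  assumes wf: "wf_ktree k t" and K: "K \<in> kcliques k t"
  shows "wf_ktree k (t @ [(K, p)])"
proof -
  have KK: "finite K" "card K = k" "\<forall>v\<in>K. v \<le> int (length t)" using wf K unfolding wf_ktree_def by auto
  have cliques: "finite K' \<and> card K' = k \<and> (\<forall>v\<in>K'. v \<le> int (length (t @ [(K, p)])))"
    if "K' \<in> kcliques k (t @ [(K, p)])" for K'
  proof -
    from that consider "K' \<in> kcliques k t" | w where "w \<in> K" "K' = insert (int (Suc (length t))) (K - {w})"
      unfolding kcliques_append by auto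
    then show ?thesis
    proof cases
      case 1
      then show ?thesis using wf unfolding wf_ktree_def by fastforce
    next
      case (2 w)
      then show ?thesis using swapped_clique[OF KK 2(1)] by simp
    qed
  qed
  have attached: "parents (t @ [(K, p)]) x \<in> kcliques k (t @ [(K, p)])
                  \<and> (\<forall>v\<in>parents (t @ [(K, p)]) x. v < int x)"
    if x: "1 \<le> x" "x \<le> length (t @ [(K, p)])" for x
  proof (cases "x = Suc (length t)")
    case True
    then show ?thesis using K KK parents_last[of t "(K, p)"] unfolding kcliques_append by auto
  next
    case False
    hence "x \<le> length t" using x by auto
    then show ?thesis using wf x parents_append[of x t "(K, p)"]
      unfolding wf_ktree_def kcliques_append by auto
  qed
  show ?thesis unfolding wf_ktree_def using cliques attached by blast
qed

lemma oktrees_wf: "t \<in> oktrees k n \<Longrightarrow> wf_ktree k t \<and> length t = n"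
proof (induction n arbitrary: t)
  case 0 thus ?case by (simp add: wf_ktree_Nil)
next
  case (Suc n)
  then obtain t' K p where "t = t' @ [(K, p)]" "t' \<in> oktrees k n" "K \<in> kcliques k t'" by auto
  thus ?case using Suc.IH wf_ktree_append by auto
qed

lemma wf_parents:
  assumes "wf_ktree k t" "1 \<le> x" "x \<le> length t"
  shows "parents t x \<in> kcliques k t" "finite (parents t x)" "card (parents t x) = k"
    and "\<And>v. v \<in> parents t x \<Longrightarrow> v < int x"
  using assms unfolding wf_ktree_def by blast+

lemma card_slots_of:
  assumes wf: "wf_ktree k t" and A: "A \<subseteq> {1..length t}"
  shows "card (SIGMA x:A. parents t x) = k * card A"
proof -
  have "finite A" using A finite_subset by blast
  hence "card (SIGMA x:A. parents t x) = (\<Sum>x\<in>A. card (parents t x))"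
    using wf_parents[OF wf] A by (intro card_SigmaI) auto
  also have "\<dots> = (\<Sum>x\<in>A. k)" using wf_parents[OF wf] A by (intro sum.cong) auto
  finally show ?thesis by simp
qed

lemma finite_clique_slots: "wf_ktree k t \<Longrightarrow> finite (clique_slots t)"
  unfolding clique_slots_def using wf_parents by (intro finite_SigmaI) auto

text \<open>Distinct slots give distinct cliques: the largest vertex identifies the node, and the
  missing parent identifies the slot.\<close>
lemma inj_child_clique:
  assumes wf: "wf_ktree k t" shows "inj_on (child_clique t) (clique_slots t)"
proof
  fix p q assume p: "p \<in> clique_slots t" and q: "q \<in> clique_slots t"
    and eq: "child_clique t p = child_clique t q"
  obtain x w y z where pq: "p = (x, w)" "q = (y, z)" by force
  have x: "1 \<le> x" "x \<le> length t" "w \<in> parents t x" using p pq unfolding clique_slots_def by auto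
  have y: "1 \<le> y" "y \<le> length t" "z \<in> parents t y" using q pq unfolding clique_slots_def by auto
  have e: "insert (int x) (parents t x - {w}) = insert (int y) (parents t y - {z})"
    using eq pq unfolding child_clique_def by simp
  have "int x \<le> int y" "int y \<le> int x"
    using e wf_parents(4)[OF wf x(1,2)] wf_parents(4)[OF wf y(1,2)] by (force, force)
  hence xy: "x = y" by simp
  have "int x \<notin> parents t x" using wf_parents(4)[OF wf x(1,2)] by force
  hence "parents t x - {w} = insert (int x) (parents t x - {w}) - {int x}"
    and "parents t x - {z} = insert (int x) (parents t x - {z}) - {int x}" by auto
  hence "parents t x - {w} = parents t x - {z}" using e xy by metis
  hence "w = z" using x(3) y(3) xy by blast
  thus "p = q" using pq xy by simp
qed

lemma root_not_child_clique: "p \<in> clique_slots t \<Longrightarrow> root_clique k \<noteq> child_clique t p"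
proof
  assume "p \<in> clique_slots t" "root_clique k = child_clique t p"
  hence "int (fst p) \<in> root_clique k" "1 \<le> fst p" unfolding child_clique_def clique_slots_def by auto
  thus False unfolding root_clique_def by auto
qed

lemma finite_kcliques: "wf_ktree k t \<Longrightarrow> finite (kcliques k t)"
  unfolding kcliques_slots using finite_clique_slots by blast

lemma card_kcliques: assumes wf: "wf_ktree k t" shows "card (kcliques k t) = 1 + k * length t"
proof -
  have "root_clique k \<notin> child_clique t ` clique_slots t" using root_not_child_clique by blast
  hence "card (kcliques k t) = 1 + card (child_clique t ` clique_slots t)"
    unfolding kcliques_slots using finite_clique_slots[OF wf] by simp
  also have "card (child_clique t ` clique_slots t) = card (clique_slots t)"
    using inj_child_clique[OF wf] by (rule card_image)
  also have "card (clique_slots t) = k * length t"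
    unfolding clique_slots_def using card_slots_of[OF wf, of "{1..length t}"] by simp
  finally show ?thesis .
qed


section \<open>Descendants\<close>

lemma desc_range:
  assumes wf: "wf_ktree k t" and d: "desc t u w"
  shows "u \<le> w \<and> (w = u \<or> (1 \<le> w \<and> w \<le> int (length t)))"
  using d
proof (induction rule: desc.induct)
  case self thus ?case by simp
next
  case (step w v)
  have "1 \<le> nat w" "nat w \<le> length t" using step.hyps by auto
  hence "v < int (nat w)" using wf_parents(4)[OF wf] step.hyps(3) by blast
  thus ?case using step by simp
qed

lemma desc_append_mono: "desc t u w \<Longrightarrow> desc (t @ [e]) u w"
proof (induction rule: desc.induct)
  case self thus ?case by (rule desc.self)
next
  case (step w v)
  hence "v \<in> parents (t @ [e]) (nat w)" using parents_append[of "nat w" t e] by simp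
  thus ?case using desc.step[of w "t @ [e]" v u] step by simp
qed

lemma desc_appendD:
  assumes wf: "wf_ktree k t" and d: "desc (t @ [e]) u w"
  shows "desc t u w \<or> (w = int (Suc (length t)) \<and> (\<exists>v\<in>fst e. desc t u v))"
  using d
proof (induction rule: desc.induct)
  case self thus ?case by (simp add: desc.self)
next
  case (step w v)
  show ?case
  proof (cases "w = int (Suc (length t))")
    case True
    hence "nat w = Suc (length t)" by simp
    hence "v \<in> fst e" using step.hyps(3) parents_last[of t e] by simp
    thus ?thesis using step.IH True by blast
  next
    case False
    hence wn: "1 \<le> nat w" "nat w \<le> length t" using step.hyps(1,2) by auto
    hence pv: "v \<in> parents t (nat w)" using step.hyps(3) parents_append[of "nat w" t e] by simp
    hence "v < w" using wf_parents(4)[OF wf wn] step.hyps(1) by simp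
    hence "desc t u v" using step.IH wn step.hyps(1) by auto
    hence "desc t u w" using desc.step[OF step.hyps(1) _ pv] wn step.hyps(1) by simp
    thus ?thesis by blast
  qed
qed

lemma desc_append:
  assumes wf: "wf_ktree k t"
  shows "desc (t @ [e]) u w \<longleftrightarrow> desc t u w \<or> (w = int (Suc (length t)) \<and> (\<exists>v\<in>fst e. desc t u v))"
proof
  assume "desc t u w \<or> (w = int (Suc (length t)) \<and> (\<exists>v\<in>fst e. desc t u v))"
  thus "desc (t @ [e]) u w"
  proof
    assume new: "w = int (Suc (length t)) \<and> (\<exists>v\<in>fst e. desc t u v)"
    then obtain v where v: "v \<in> fst e" "desc t u v" by blast
    have "nat w = Suc (length t)" using new by simp
    hence "v \<in> parents (t @ [e]) (nat w)" using v(1) parents_last[of t e] by simp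
    thus ?thesis using desc.step[of w "t @ [e]" v u] new v(2) desc_append_mono by simp
  qed (rule desc_append_mono)
qed (rule desc_appendD[OF wf])

definition desc_set :: "oktree \<Rightarrow> nat \<Rightarrow> int set" where
  "desc_set t u = {w. desc t (int u) w}"

lemma num_desc_eq: "num_desc t u = card (desc_set t u)"
  unfolding num_desc_def desc_set_def by simp

lemma desc_set_bounds:
  assumes wf: "wf_ktree k t" and u: "1 \<le> u" "u \<le> length t"
  shows "desc_set t u \<subseteq> {int u .. int (length t)}" "finite (desc_set t u)" "int u \<in> desc_set t u"
proof -
  show bounds: "desc_set t u \<subseteq> {int u .. int (length t)}"
    unfolding desc_set_def using desc_range[OF wf] u by fastforce
  show "finite (desc_set t u)" using bounds finite_subset by blast
  show "int u \<in> desc_set t u" unfolding desc_set_def by (simp add: desc.self)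
qed

lemma num_desc_pos:
  assumes wf: "wf_ktree k t" and u: "1 \<le> u" "u \<le> length t"
  shows "num_desc t u \<ge> 1"
  using desc_set_bounds(2,3)[OF wf u] card_gt_0_iff unfolding num_desc_eq
  by (metis One_nat_def Suc_leI empty_iff)

lemma num_desc_append:
  assumes wf: "wf_ktree k t" and u: "1 \<le> u" "u \<le> length t"
  shows "num_desc (t @ [e]) u = num_desc t u + (if fst e \<inter> desc_set t u \<noteq> {} then 1 else 0)"
proof -
  have "desc_set (t @ [e]) u
        = desc_set t u \<union> (if fst e \<inter> desc_set t u \<noteq> {} then {int (Suc (length t))} else {})"
    unfolding desc_set_def using desc_append[OF wf, of e "int u"] by auto
  moreover have "int (Suc (length t)) \<notin> desc_set t u" using desc_set_bounds(1)[OF wf u] by auto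
  ultimately show ?thesis unfolding num_desc_eq using desc_set_bounds(2)[OF wf u] by auto
qed

lemma num_desc_last:
  assumes wf: "wf_ktree k t" and len: "length t = Suc n"
  shows "num_desc t (Suc n) = 1"
proof -
  have "desc_set t (Suc n) = {int (Suc n)}"
    using desc_set_bounds[OF wf, of "Suc n"] len by auto
  thus ?thesis unfolding num_desc_eq by simp
qed

lemma card_desc_nodes:
  assumes wf: "wf_ktree k t" and u: "1 \<le> u" "u \<le> length t"
  shows "card {x\<in>{1..length t}. int x \<in> desc_set t u} = num_desc t u"
proof -
  have "int ` {x\<in>{1..length t}. int x \<in> desc_set t u} = desc_set t u"
  proof
    show "desc_set t u \<subseteq> int ` {x\<in>{1..length t}. int x \<in> desc_set t u}"
    proof
      fix w assume w: "w \<in> desc_set t u"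
      hence "w \<in> {int u .. int (length t)}" using desc_set_bounds(1)[OF wf u] by blast
      hence "nat w \<in> {1..length t}" "w = int (nat w)" using u by auto
      thus "w \<in> int ` {x\<in>{1..length t}. int x \<in> desc_set t u}" using w by force
    qed
  qed auto
  moreover have "inj_on int A" for A by (simp add: inj_on_def)
  ultimately show ?thesis unfolding num_desc_eq by (metis card_image)
qed

section \<open>Counting the insertions\<close>

definition insertions :: "nat \<Rightarrow> oktree \<Rightarrow> (int set \<times> nat) set" where
  "insertions k t = (SIGMA K:kcliques k t. {..outdeg t K})"

lemma finite_insertions: "wf_ktree k t \<Longrightarrow> finite (insertions k t)"
  unfolding insertions_def using finite_kcliques by (intro finite_SigmaI) auto

lemma sum_outdeg:
  assumes S: "finite S"
  shows "(\<Sum>K\<in>S. outdeg t K) = card {x\<in>{1..length t}. parents t x \<in> S}"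
proof -
  let ?X = "{x\<in>{1..length t}. parents t x \<in> S}"
  have "(\<Sum>K\<in>S. outdeg t K) = (\<Sum>K\<in>S. \<Sum>x\<in>{x\<in>?X. parents t x = K}. 1::nat)"
    unfolding outdeg_def by (intro sum.cong) (auto intro: arg_cong[where f = card])
  also have "\<dots> = (\<Sum>x\<in>?X. 1)" using S by (intro sum.group) auto
  finally show ?thesis by simp
qed

text \<open>Insertions into a class of cliques: one position per clique plus one per existing child.\<close>
lemma card_insertions_filter:
  assumes wf: "wf_ktree k t"
  shows "card {c\<in>insertions k t. P (fst c)}
         = card {K\<in>kcliques k t. P K} + card {x\<in>{1..length t}. P (parents t x) \<and> parents t x \<in> kcliques k t}"
proof -
  let ?S = "{K\<in>kcliques k t. P K}"
  have fin: "finite ?S" using finite_kcliques[OF wf] by simp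
  have "{c\<in>insertions k t. P (fst c)} = (SIGMA K:?S. {..outdeg t K})"
    unfolding insertions_def by auto
  hence "card {c\<in>insertions k t. P (fst c)} = (\<Sum>K\<in>?S. 1 + outdeg t K)"
    using fin by (simp add: card_SigmaI)
  also have "\<dots> = card ?S + (\<Sum>K\<in>?S. outdeg t K)" by (subst sum.distrib) simp
  also have "\<dots> = card ?S + card {x\<in>{1..length t}. parents t x \<in> ?S}"
    using sum_outdeg[OF fin] by simp
  also have "{x\<in>{1..length t}. parents t x \<in> ?S}
             = {x\<in>{1..length t}. P (parents t x) \<and> parents t x \<in> kcliques k t}" by auto
  finally show ?thesis .
qed

lemma card_insertions:
  assumes wf: "wf_ktree k t"
  shows "card (insertions k t) = 1 + (k + 1) * length t"
proof -
  have "{x\<in>{1..length t}. True \<and> parents t x \<in> kcliques k t} = {1..length t}"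
    using wf_parents(1)[OF wf] by auto
  thus ?thesis using card_insertions_filter[OF wf, of "\<lambda>_. True"] card_kcliques[OF wf] by simp
qed

lemma cliques_meeting_desc:
  assumes wf: "wf_ktree k t" and u: "1 \<le> u" "u \<le> length t"
  shows "{K\<in>kcliques k t. K \<inter> desc_set t u \<noteq> {}}
         = child_clique t ` (SIGMA x:{x\<in>{1..length t}. int x \<in> desc_set t u}. parents t x)"
proof (rule set_eqI, rule iffI)
  fix K assume K: "K \<in> {K\<in>kcliques k t. K \<inter> desc_set t u \<noteq> {}}"
  then obtain y where y: "y \<in> K" "y \<in> desc_set t u" by blast
  have "K \<noteq> root_clique k"
    using y desc_set_bounds(1)[OF wf u] u unfolding root_clique_def by fastforce
  then obtain x w where p: "(x, w) \<in> clique_slots t" "K = child_clique t (x, w)"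
    using K unfolding kcliques_slots by auto
  have x: "1 \<le> x" "x \<le> length t" "w \<in> parents t x" using p unfolding clique_slots_def by auto
  have "int x \<in> desc_set t u"
  proof (cases "y = int x")
    case False
    hence "y \<in> parents t x" using y p unfolding child_clique_def by auto
    thus ?thesis using desc.step[of "int x" t y "int u"] x y unfolding desc_set_def by simp
  qed (use y in simp)
  thus "K \<in> child_clique t ` (SIGMA x:{x\<in>{1..length t}. int x \<in> desc_set t u}. parents t x)"
    using p x by auto
next
  fix K assume "K \<in> child_clique t ` (SIGMA x:{x\<in>{1..length t}. int x \<in> desc_set t u}. parents t x)"
  then obtain x w where xw: "K = child_clique t (x, w)" "1 \<le> x" "x \<le> length t"
    "int x \<in> desc_set t u" "w \<in> parents t x" by auto
  hence "K \<in> kcliques k t" unfolding kcliques_slots clique_slots_def by auto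
  moreover have "int x \<in> K" using xw unfolding child_clique_def by simp
  ultimately show "K \<in> {K\<in>kcliques k t. K \<inter> desc_set t u \<noteq> {}}" using xw by blast
qed

lemma card_cliques_meeting_desc:
  assumes wf: "wf_ktree k t" and u: "1 \<le> u" "u \<le> length t"
  shows "card {K\<in>kcliques k t. K \<inter> desc_set t u \<noteq> {}} = k * num_desc t u"
proof -
  let ?A = "{x\<in>{1..length t}. int x \<in> desc_set t u}"
  have "(SIGMA x:?A. parents t x) \<subseteq> clique_slots t" unfolding clique_slots_def by auto
  hence "card (child_clique t ` (SIGMA x:?A. parents t x)) = card (SIGMA x:?A. parents t x)"
    using inj_on_subset[OF inj_child_clique[OF wf]] by (intro card_image)
  also have "\<dots> = k * card ?A" by (rule card_slots_of[OF wf]) auto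
  finally show ?thesis using cliques_meeting_desc[OF wf u] card_desc_nodes[OF wf u] by simp
qed

lemma children_meeting_desc:
  assumes wf: "wf_ktree k t" and u: "1 \<le> u" "u \<le> length t"
  shows "{x\<in>{1..length t}. parents t x \<inter> desc_set t u \<noteq> {} \<and> parents t x \<in> kcliques k t}
         = {x\<in>{1..length t}. int x \<in> desc_set t u} - {u}"
proof (rule set_eqI, rule iffI)
  fix x assume "x \<in> {x\<in>{1..length t}. parents t x \<inter> desc_set t u \<noteq> {} \<and> parents t x \<in> kcliques k t}"
  then obtain v where x: "1 \<le> x" "x \<le> length t" "v \<in> parents t x" "v \<in> desc_set t u" by auto
  have "x \<noteq> u" using x desc_range[OF wf, of "int u" v] wf_parents(4)[OF wf u]
    unfolding desc_set_def by force
  thus "x \<in> {x\<in>{1..length t}. int x \<in> desc_set t u} - {u}"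
    using x desc.step[of "int x" t v "int u"] unfolding desc_set_def by simp
next
  fix x assume x: "x \<in> {x\<in>{1..length t}. int x \<in> desc_set t u} - {u}"
  hence d: "desc t (int u) (int x)" "int x \<noteq> int u" "1 \<le> x" "x \<le> length t"
    unfolding desc_set_def by auto
  from d(1,2) obtain v where "v \<in> parents t x" "desc t (int u) v"
    by (cases rule: desc.cases) auto
  thus "x \<in> {x\<in>{1..length t}. parents t x \<inter> desc_set t u \<noteq> {} \<and> parents t x \<in> kcliques k t}"
    using d wf_parents(1)[OF wf d(3,4)] unfolding desc_set_def by auto
qed

lemma card_insertions_meeting_desc:
  assumes wf: "wf_ktree k t" and u: "1 \<le> u" "u \<le> length t"
  shows "card {c\<in>insertions k t. fst c \<inter> desc_set t u \<noteq> {}} + 1 = (k + 1) * num_desc t u"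
proof -
  let ?A = "{x\<in>{1..length t}. int x \<in> desc_set t u}"
  have "u \<in> ?A" using u desc_set_bounds(3)[OF wf u] by simp
  hence "card (?A - {u}) = num_desc t u - 1"
    using card_desc_nodes[OF wf u] by (simp add: card_Diff_singleton)
  thus ?thesis
    using card_insertions_filter[OF wf, of "\<lambda>K. K \<inter> desc_set t u \<noteq> {}"]
      card_cliques_meeting_desc[OF wf u] children_meeting_desc[OF wf u] num_desc_pos[OF wf u]
    by simp
qed


lemma card_insertions_avoiding_desc:
  assumes wf: "wf_ktree k t" and u: "1 \<le> u" "u \<le> length t"
  shows "real (card {c\<in>insertions k t. fst c \<inter> desc_set t u = {}})
         = 1 + (real k + 1) * real (length t) - ((real k + 1) * real (num_desc t u) - 1)"
proof -
  let ?A = "{c\<in>insertions k t. fst c \<inter> desc_set t u = {}}"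
  let ?B = "{c\<in>insertions k t. fst c \<inter> desc_set t u \<noteq> {}}"
  have "card (?A \<union> ?B) = card ?A + card ?B"
    using finite_insertions[OF wf] by (intro card_Un_disjoint) auto
  moreover have "?A \<union> ?B = insertions k t" by auto
  ultimately have "card ?A + card ?B = 1 + (k + 1) * length t"
    using card_insertions[OF wf] by simp
  hence "real (card ?A + card ?B) = real (1 + (k + 1) * length t)" by (rule arg_cong)
  hence "real (card ?A) + real (card ?B) = 1 + (real k + 1) * real (length t)"
    by (simp add: algebra_simps)
  moreover have "real (card ?B) + 1 = (real k + 1) * real (num_desc t u)"
    using arg_cong[OF card_insertions_meeting_desc[OF wf u], of real] by (simp add: algebra_simps)
  ultimately show ?thesis by linarith
qed


section \<open>The recurrence for the number of nodes with m descendants\<close>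

lemma oktrees_Suc_image:
  "oktrees k (Suc n) = (\<lambda>(t, c). t @ [c]) ` (SIGMA t:oktrees k n. insertions k t)"
  unfolding insertions_def by (auto simp: image_def)

lemma finite_oktrees: "finite (oktrees k n)"
proof (induction n)
  case (Suc n)
  have "finite (SIGMA t:oktrees k n. insertions k t)"
    using Suc finite_insertions oktrees_wf by (intro finite_SigmaI) auto
  thus ?case unfolding oktrees_Suc_image by simp
qed simp

lemma card_oktrees_Suc_filter:
  "card {t'\<in>oktrees k (Suc n). P t'} = (\<Sum>t\<in>oktrees k n. card {c\<in>insertions k t. P (t @ [c])})"
proof -
  have "{t'\<in>oktrees k (Suc n). P t'}
        = (\<lambda>(t, c). t @ [c]) ` (SIGMA t:oktrees k n. {c\<in>insertions k t. P (t @ [c])})"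
    unfolding oktrees_Suc_image by auto
  moreover have "inj_on (\<lambda>(t, c). t @ [c]) A" for A :: "(oktree \<times> (int set \<times> nat)) set"
    by (auto simp: inj_on_def)
  ultimately have "card {t'\<in>oktrees k (Suc n). P t'}
                   = card (SIGMA t:oktrees k n. {c\<in>insertions k t. P (t @ [c])})"
    by (simp add: card_image)
  also have "\<dots> = (\<Sum>t\<in>oktrees k n. card {c\<in>insertions k t. P (t @ [c])})"
    using finite_oktrees finite_insertions oktrees_wf by (intro card_SigmaI) auto
  finally show ?thesis .
qed

lemma card_oktrees_Suc: "card (oktrees k (Suc n)) = card (oktrees k n) * (1 + (k + 1) * n)"
  using card_oktrees_Suc_filter[of k n "\<lambda>_. True"] card_insertions oktrees_wf by simp

lemma card_oktrees_pos: "card (oktrees k n) > 0"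
  by (induction n) (simp, simp add: card_oktrees_Suc del: oktrees.simps)

lemma card_insertions_num_desc:
  assumes t: "t \<in> oktrees k n" and u: "1 \<le> u" "u \<le> n"
  shows "real (card {c\<in>insertions k t. num_desc (t @ [c]) u = m}) =
     (if num_desc t u = m then (1 + (real k + 1) * real n) - ((real k + 1) * real m - 1) else 0)
   + (if num_desc t u + 1 = m then (real k + 1) * real (num_desc t u) - 1 else 0)"
proof -
  have wf: "wf_ktree k t" and len: "length t = n" using oktrees_wf[OF t] by auto
  have u': "1 \<le> u" "u \<le> length t" using u len by auto
  let ?d = "num_desc t u"
  let ?P = "\<lambda>c. fst c \<inter> desc_set t u \<noteq> {}"
  have step: "num_desc (t @ [c]) u = ?d + (if ?P c then 1 else 0)" for c
    using num_desc_append[OF wf u'] by simp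
  have grow: "real (card {c\<in>insertions k t. ?P c}) = (real k + 1) * real ?d - 1"
    using arg_cong[OF card_insertions_meeting_desc[OF wf u'], of real] by (simp add: algebra_simps)
  have stay: "real (card {c\<in>insertions k t. \<not> ?P c})
              = (1 + (real k + 1) * real n) - ((real k + 1) * real ?d - 1)"
    using card_insertions_avoiding_desc[OF wf u'] len by simp
  consider "?d = m" | "?d + 1 = m" | "?d \<noteq> m" "?d + 1 \<noteq> m" by blast
  thus ?thesis
  proof cases
    case 1
    hence "{c\<in>insertions k t. num_desc (t @ [c]) u = m} = {c\<in>insertions k t. \<not> ?P c}" using step by auto
    thus ?thesis using 1 stay by simp
  next
    case 2
    hence "{c\<in>insertions k t. num_desc (t @ [c]) u = m} = {c\<in>insertions k t. ?P c}" using step by auto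
    thus ?thesis using 2 grow by simp
  next
    case 3
    hence "{c\<in>insertions k t. num_desc (t @ [c]) u = m} = {}" using step by auto
    thus ?thesis using 3 by (simp only: card.empty) simp
  qed
qed

definition desc_count :: "nat \<Rightarrow> nat \<Rightarrow> nat \<Rightarrow> nat" where
  "desc_count k n m = (\<Sum>u\<in>{1..n}. card {t\<in>oktrees k n. num_desc t u = m})"

text \<open>Every node is its own descendant, so no node has 0 descendants.\<close>
lemma desc_count_0: "desc_count k n 0 = 0"
proof -
  have "num_desc t u \<noteq> 0" if "t \<in> oktrees k n" "u \<in> {1..n}" for t u
    using oktrees_wf[OF that(1)] num_desc_pos[of k t u] that(2) by auto
  hence empty: "{t\<in>oktrees k n. num_desc t u = 0} = {}" if "u \<in> {1..n}" for u using that by blast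
  show ?thesis unfolding desc_count_def
  proof (intro sum.neutral ballI)
    fix u assume "u \<in> {1..n}"
    show "card {t\<in>oktrees k n. num_desc t u = 0} = 0"
      by (simp only: empty[OF \<open>u \<in> {1..n}\<close>] card.empty)
  qed
qed

lemma sum_if_const:
  "finite A \<Longrightarrow> (\<Sum>x\<in>A. if P x then (c::real) else 0) = c * real (card {x\<in>A. P x})"
  by (simp add: sum.inter_filter[symmetric])

text \<open>Contribution of an old node u: it keeps m descendants or reaches m from m - 1.\<close>
lemma desc_count_Suc_old_node:
  assumes m: "m \<ge> 1" and u: "u \<in> {1..n}"
  shows "real (card {t\<in>oktrees k (Suc n). num_desc t u = m})
         = (1 + (real k + 1) * real n - ((real k + 1) * real m - 1)) * real (card {t\<in>oktrees k n. num_desc t u = m})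
           + ((real k + 1) * real (m - 1) - 1) * real (card {t\<in>oktrees k n. num_desc t u = m - 1})"
proof -
  let ?a = "1 + (real k + 1) * real n - ((real k + 1) * real m - 1)"
  let ?b = "(real k + 1) * real (m - 1) - 1"
  have "real (card {t\<in>oktrees k (Suc n). num_desc t u = m})
        = (\<Sum>t\<in>oktrees k n. real (card {c\<in>insertions k t. num_desc (t @ [c]) u = m}))"
    using card_oktrees_Suc_filter[of k n "\<lambda>t'. num_desc t' u = m"] by (simp del: oktrees.simps)
  also have "\<dots> = (\<Sum>t\<in>oktrees k n. (if num_desc t u = m then ?a else 0) + (if num_desc t u = m - 1 then ?b else 0))"
  proof (rule sum.cong[OF refl])
    fix t assume t: "t \<in> oktrees k n"
    have "(num_desc t u + 1 = m) = (num_desc t u = m - 1)" using m by auto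
    thus "real (card {c\<in>insertions k t. num_desc (t @ [c]) u = m})
          = (if num_desc t u = m then ?a else 0) + (if num_desc t u = m - 1 then ?b else 0)"
      using card_insertions_num_desc[OF t, of u m] u by auto
  qed
  also have "\<dots> = ?a * real (card {t\<in>oktrees k n. num_desc t u = m})
                  + ?b * real (card {t\<in>oktrees k n. num_desc t u = m - 1})"
    by (simp add: sum.distrib sum_if_const finite_oktrees)
  finally show ?thesis .
qed

lemma desc_count_Suc_new_node:
  "real (card {t\<in>oktrees k (Suc n). num_desc t (Suc n) = m})
   = (if m = 1 then real (card (oktrees k n)) * (1 + (real k + 1) * real n) else 0)"
proof -
  have "num_desc t (Suc n) = 1" if "t \<in> oktrees k (Suc n)" for t
    using oktrees_wf[OF that] num_desc_last by blast
  hence "{t\<in>oktrees k (Suc n). num_desc t (Suc n) = m} = (if m = 1 then oktrees k (Suc n) else {})"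
    by (auto simp del: oktrees.simps)
  thus ?thesis using card_oktrees_Suc[of k n] by (simp del: oktrees.simps add: algebra_simps)
qed

lemma desc_count_Suc:
  assumes m: "m \<ge> 1"
  shows "real (desc_count k (Suc n) m) =
     real (desc_count k n m) * (1 + (real k + 1) * real n - ((real k + 1) * real m - 1))
   + real (desc_count k n (m - 1)) * ((real k + 1) * real (m - 1) - 1)
   + (if m = 1 then real (card (oktrees k n)) * (1 + (real k + 1) * real n) else 0)"
proof -
  have "real (desc_count k (Suc n) m)
        = (\<Sum>u\<in>{1..n}. real (card {t\<in>oktrees k (Suc n). num_desc t u = m}))
          + real (card {t\<in>oktrees k (Suc n). num_desc t (Suc n) = m})"
    unfolding desc_count_def by (simp del: oktrees.simps)
  also have "(\<Sum>u\<in>{1..n}. real (card {t\<in>oktrees k (Suc n). num_desc t u = m}))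
     = (\<Sum>u\<in>{1..n}. (1 + (real k + 1) * real n - ((real k + 1) * real m - 1))
                          * real (card {t\<in>oktrees k n. num_desc t u = m})
                       + ((real k + 1) * real (m - 1) - 1) * real (card {t\<in>oktrees k n. num_desc t u = m - 1}))"
    by (rule sum.cong[OF refl desc_count_Suc_old_node[OF m]])
  also have "\<dots> = real (desc_count k n m) * (1 + (real k + 1) * real n - ((real k + 1) * real m - 1))
       + real (desc_count k n (m - 1)) * ((real k + 1) * real (m - 1) - 1)"
    unfolding desc_count_def by (simp add: sum.distrib sum_distrib_left mult.commute)
  finally show ?thesis unfolding desc_count_Suc_new_node .
qed

lemma pmf_Xbar_desc_count:
  assumes n: "n \<ge> 1"
  shows "pmf (Xbar k n) m = real (desc_count k n m) / (real n * real (card (oktrees k n)))"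
proof -
  let ?S = "oktrees k n \<times> {1..n}"
  let ?f = "\<lambda>(t, u). num_desc t u"
  have fin: "finite ?S" using finite_oktrees by simp
  have ne: "?S \<noteq> {}" using card_oktrees_pos[of k n] n by (auto simp: card_gt_0_iff)
  have "pmf (Xbar k n) m = real (card (?S \<inter> ?f -` {m})) / real (card ?S)"
    unfolding Xbar_def pmf_map using measure_pmf_of_set[OF ne fin] by simp
  also have "?S \<inter> ?f -` {m} = (\<lambda>(u, t). (t, u)) ` (SIGMA u:{1..n}. {t\<in>oktrees k n. num_desc t u = m})"
    by (auto simp: image_def)
  also have "card \<dots> = card (SIGMA u:{1..n}. {t\<in>oktrees k n. num_desc t u = m})"
    by (rule card_image) (auto simp: inj_on_def)
  also have "\<dots> = desc_count k n m"
    unfolding desc_count_def using finite_oktrees by (intro card_SigmaI) auto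
  finally show ?thesis by (simp add: card_cartesian_product mult.commute)
qed


section \<open>Alternating binomial sums\<close>

text \<open>The j-th finite difference, up to sign, of a sequence g.\<close>
definition alt_sum :: "nat \<Rightarrow> (nat \<Rightarrow> real) \<Rightarrow> real" where
  "alt_sum j g = (\<Sum>l\<le>j. real (j choose l) * (-1) ^ l * g l)"

lemma alt_sum_add: "alt_sum j (\<lambda>l. f l + g l) = alt_sum j f + alt_sum j g"
  unfolding alt_sum_def by (simp add: sum.distrib algebra_simps)

lemma alt_sum_cmult: "alt_sum j (\<lambda>l. c * g l) = c * alt_sum j g"
  unfolding alt_sum_def by (simp add: sum_distrib_left algebra_simps)

lemma alt_sum_const: "alt_sum j (\<lambda>_. c) = (if j = 0 then c else 0)"
proof -
  have "alt_sum j (\<lambda>_. c) = c * (\<Sum>l\<le>j. (-1) ^ l * real (j choose l))"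
    unfolding alt_sum_def sum_distrib_left by (intro sum.cong) auto
  thus ?thesis by (cases "j = 0") (simp_all add: choose_alternating_sum)
qed

lemma alt_sum_absorb: "alt_sum j (\<lambda>l. (real j - real l) * g l) = real j * alt_sum (j - 1) g"
proof (cases j)
  case (Suc i)
  have "alt_sum j (\<lambda>l. (real j - real l) * g l) = (\<Sum>l\<le>j. real j * (real (i choose l) * (-1) ^ l * g l))"
    unfolding alt_sum_def
  proof (intro sum.cong refl)
    fix l assume "l \<in> {..j}"
    hence diff: "real j - real l = real (j - l)" using Suc by auto
    have "(j - l) * (j choose l) = j * (i choose l)"
      using binomial_absorb_comp[of j l] Suc by simp
    hence absorb: "real (j - l) * real (j choose l) = real j * real (i choose l)"
      by (simp only: of_nat_mult[symmetric])
    have "real (j choose l) * (-1) ^ l * ((real j - real l) * g l)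
          = (real (j - l) * real (j choose l)) * ((-1) ^ l * g l)"
      by (simp only: diff mult_ac)
    also have "\<dots> = (real j * real (i choose l)) * ((-1) ^ l * g l)"
      by (simp only: absorb)
    also have "\<dots> = real j * (real (i choose l) * (-1) ^ l * g l)"
      by (simp only: mult_ac)
    finally show "real (j choose l) * (-1) ^ l * ((real j - real l) * g l)
                  = real j * (real (i choose l) * (-1) ^ l * g l)" .
  qed
  also have "\<dots> = real j * alt_sum (j - 1) g"
    unfolding alt_sum_def Suc by (simp add: sum_distrib_left)
  finally show ?thesis .
qed (simp add: alt_sum_def)

lemma alt_sum_Suc: "alt_sum (Suc j) g = alt_sum j g - alt_sum j (\<lambda>l. g (Suc l))"
proof -
  have pascal: "real (Suc j choose Suc l) * (-1) ^ Suc l * g (Suc l)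
                = real (j choose Suc l) * (-1) ^ Suc l * g (Suc l) - real (j choose l) * (-1) ^ l * g (Suc l)"
    for l by (simp add: algebra_simps)
  have "alt_sum (Suc j) g = g 0 + (\<Sum>l\<le>j. real (Suc j choose Suc l) * (-1) ^ Suc l * g (Suc l))"
    unfolding alt_sum_def by (subst sum.atMost_Suc_shift) simp
  also have "\<dots> = (g 0 + (\<Sum>l\<le>j. real (j choose Suc l) * (-1) ^ Suc l * g (Suc l)))
                  - alt_sum j (\<lambda>l. g (Suc l))"
    unfolding pascal sum_subtractf alt_sum_def by simp
  also have "g 0 + (\<Sum>l\<le>j. real (j choose Suc l) * (-1) ^ Suc l * g (Suc l))
             = (\<Sum>l\<le>Suc j. real (j choose l) * (-1) ^ l * g l)"
    by (subst sum.atMost_Suc_shift) simp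
  also have "\<dots> = alt_sum j g" unfolding alt_sum_def by simp
  finally show ?thesis .
qed

text \<open>A beta integral in disguise: the differences of 1/(l + c).\<close>
lemma alt_sum_reciprocal:
  fixes c :: real
  assumes "c > 0"
  shows "alt_sum j (\<lambda>l. 1 / (real l + c)) = fact j / pochhammer c (Suc j)"
  using assms
proof (induction j arbitrary: c)
  case 0 thus ?case by (simp add: alt_sum_def)
next
  case (Suc j)
  have shift: "(\<lambda>l. 1 / (real (Suc l) + c)) = (\<lambda>l. 1 / (real l + (c + 1)))"
    by (simp add: algebra_simps)
  define P where "P = pochhammer (c + 1) j"
  define D where "D = c + 1 + real j"
  have P: "P > 0" unfolding P_def using Suc.prems by (intro pochhammer_pos) simp
  have D: "D > 0" "D - c = real j + 1" unfolding D_def using Suc.prems by simp_all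
  have "alt_sum (Suc j) (\<lambda>l. 1 / (real l + c))
        = fact j / pochhammer c (Suc j) - fact j / pochhammer (c + 1) (Suc j)"
    unfolding alt_sum_Suc shift using Suc.IH Suc.prems by simp
  also have "\<dots> = fact j / (c * P) - fact j / (D * P)"
    unfolding P_def D_def by (simp only: pochhammer_rec[of c j] pochhammer_rec'[of "c + 1" j])
  also have "\<dots> = fact j * (D - c) / (c * (D * P))"
    using P D(1) Suc.prems by (simp add: field_simps)
  also have "\<dots> = fact (Suc j) / (c * (D * P))"
    by (simp only: D(2) fact_Suc) (simp add: algebra_simps)
  also have "\<dots> = fact (Suc j) / pochhammer c (Suc (Suc j))"
    unfolding P_def D_def by (simp only: pochhammer_rec[of c "Suc j"] pochhammer_rec'[of "c + 1" j])
  finally show ?case .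
qed


section \<open>The closed form and its recurrence\<close>

text \<open>The normalising binomial coefficient; n! (k+1)^n times it counts the trees of size n.\<close>
definition norm_binom :: "nat \<Rightarrow> nat \<Rightarrow> real" where
  "norm_binom k n = (real n - real k / (real k + 1)) gchoose n"

definition binom_ratio :: "nat \<Rightarrow> nat \<Rightarrow> nat \<Rightarrow> real" where
  "binom_ratio k n l = ((real n - real l - 2 + 2 / (real k + 1)) gchoose n) / norm_binom k n"

text \<open>The l-th summand of the theorem, relative to the normalising coefficient.\<close>
definition qterm :: "nat \<Rightarrow> nat \<Rightarrow> nat \<Rightarrow> real" where
  "qterm k n l = ((1 + (real k + 1) * real n) - binom_ratio k n l) / ((real k + 1) * (real l + 1) + real k)"

definition prefactor :: "nat \<Rightarrow> nat \<Rightarrow> real" where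
  "prefactor k m = (real m - 1 - 1 / (real k + 1)) gchoose (m - 1)"

text \<open>Closed form of the expected number of nodes with exactly m descendants.\<close>
definition mean_count :: "nat \<Rightarrow> nat \<Rightarrow> nat \<Rightarrow> real" where
  "mean_count k n m = prefactor k m * alt_sum (m - 1) (qterm k n)"

lemma gchoose_Suc: "((x::real) + 1) gchoose (Suc n) = (x gchoose n) * (x + 1) / (real n + 1)"
proof -
  have "real (Suc n) * ((x + 1) gchoose Suc n) = (x + 1) * ((x + 1 - 1) gchoose n)"
    by (rule gbinomial_absorption)
  thus ?thesis by (simp add: field_simps)
qed

lemma norm_binom_Suc: "norm_binom k (Suc n) = norm_binom k n * (real n + 1 / (real k + 1)) / (real n + 1)"
proof -
  have "norm_binom k (Suc n) = ((real n - real k / (real k + 1)) + 1) gchoose (Suc n)"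
    unfolding norm_binom_def by (simp add: algebra_simps)
  also have "\<dots> = norm_binom k n * ((real n - real k / (real k + 1)) + 1) / (real n + 1)"
    unfolding gchoose_Suc norm_binom_def by simp
  also have "(real n - real k / (real k + 1)) + 1 = real n + 1 / (real k + 1)"
    by (simp add: field_simps)
  finally show ?thesis .
qed

lemma norm_binom_pos: "norm_binom k n > 0"
proof (induction n)
  case (Suc n)
  have "real n + 1 / (real k + 1) > 0" by (simp add: add_nonneg_pos)
  thus ?case using Suc by (simp add: norm_binom_Suc)
qed (simp add: norm_binom_def)

lemma first_binom_eq: "(real n + 1 / (real k + 1)) gchoose n = (1 + (real k + 1) * real n) * norm_binom k n"
proof (induction n)
  case (Suc n)
  have "(real (Suc n) + 1 / (real k + 1)) gchoose (Suc n)
        = ((real n + 1 / (real k + 1)) gchoose n) * ((real n + 1 / (real k + 1)) + 1) / (real n + 1)"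
    using gchoose_Suc[of "real n + 1 / (real k + 1)" n] by (simp add: algebra_simps)
  also have "\<dots> = (1 + (real k + 1) * real (Suc n)) * norm_binom k (Suc n)"
    unfolding Suc norm_binom_Suc by (simp add: field_simps)
  finally show ?case .
qed (simp add: norm_binom_def)

lemma binom_ratio_0: "binom_ratio k 0 l = 1"
  by (simp add: binom_ratio_def norm_binom_def)

lemma binom_ratio_Suc:
  "binom_ratio k (Suc n) l * (1 + (real k + 1) * real n)
   = binom_ratio k n l * ((real k + 1) * (real n - real l - 1) + 2)"
proof -
  define a where "a = real k + 1"
  define x where "x = real n - real l - 2 + 2 / a"
  define X where "X = x gchoose n"
  define G where "G = norm_binom k n"
  define N where "N = real n + 1 / a"
  define M where "M = real n + 1"
  have a: "a > 0" unfolding a_def by simp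
  have pos: "G > 0" "N > 0" "M > 0"
    unfolding G_def N_def M_def using norm_binom_pos a by (auto simp: add_nonneg_pos)
  have "(real (Suc n) - real l - 2 + 2 / a) gchoose (Suc n) = X * (x + 1) / M"
    unfolding X_def M_def x_def using gchoose_Suc[of x n] unfolding x_def by (simp add: algebra_simps)
  hence ratio_Suc: "binom_ratio k (Suc n) l = (X * (x + 1) / M) / (G * N / M)"
    unfolding binom_ratio_def norm_binom_Suc G_def N_def M_def a_def by simp
  have ratio: "binom_ratio k n l = X / G" unfolding binom_ratio_def X_def x_def G_def a_def ..
  have "1 + a * real n = a * N" "a * (x + 1) = a * (real n - real l - 1) + 2"
    unfolding N_def x_def using a by (simp_all add: field_simps)
  hence "binom_ratio k (Suc n) l * (1 + a * real n) = (X * (x + 1) / M) / (G * N / M) * (a * N)"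
    unfolding ratio_Suc by simp
  also have "\<dots> = X / G * (a * (x + 1))" using pos by (simp add: field_simps)
  also have "\<dots> = binom_ratio k n l * (a * (real n - real l - 1) + 2)"
    unfolding ratio \<open>a * (x + 1) = a * (real n - real l - 1) + 2\<close> ..
  finally show ?thesis unfolding a_def .
qed

lemma qterm_0: "qterm k 0 l = 0"
  by (simp add: qterm_def binom_ratio_0)

text \<open>The recurrence for qterm, with the shift j separated out so that after multiplying by
  the j-th alternating weights the last summand is absorbed (see alt_sum_absorb).\<close>
lemma qterm_Suc:
  "qterm k (Suc n) l * (1 + (real k + 1) * real n) =
   (1 + (real k + 1) * real n - ((real k + 1) * (real j + 1) - 1)) * qterm k n l
   + (1 + (real k + 1) * real n) + (real k + 1) * ((real j - real l) * qterm k n l)"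
proof -
  let ?W = "1 + (real k + 1) * real n"
  let ?c = "(real k + 1) * (real l + 1) + real k"
  have c: "?c > 0" by (simp add: add_pos_nonneg)
  have "qterm k (Suc n) l * ?W = ((1 + (real k + 1) * real (Suc n)) * ?W - binom_ratio k (Suc n) l * ?W) / ?c"
    unfolding qterm_def by (simp add: field_simps)
  also have "\<dots> = ((1 + (real k + 1) * real (Suc n)) * ?W
                   - binom_ratio k n l * ((real k + 1) * (real n - real l - 1) + 2)) / ?c"
    by (simp only: binom_ratio_Suc)
  also have "\<dots> = (?W + (real k + 1)) * qterm k n l + binom_ratio k n l"
    unfolding qterm_def using c by (simp add: field_simps)
  finally have "qterm k (Suc n) l * ?W = (?W + (real k + 1)) * qterm k n l + binom_ratio k n l" .
  moreover have "?c * qterm k n l = ?W - binom_ratio k n l"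
    unfolding qterm_def using c by simp
  ultimately show ?thesis by (simp add: algebra_simps)
qed

lemma prefactor_step:
  assumes "j \<ge> 1"
  shows "(real k + 1) * real j * prefactor k (Suc j) = prefactor k j * ((real k + 1) * real j - 1)"
proof -
  obtain i where j: "j = Suc i" using assms by (cases j) auto
  let ?x = "real j - 1 / (real k + 1)"
  have "real j * (?x gchoose j) = ?x * ((?x - 1) gchoose i)"
    using gbinomial_absorption[of i ?x] j by simp
  moreover have "prefactor k (Suc j) = ?x gchoose j" "prefactor k j = (?x - 1) gchoose i"
    unfolding prefactor_def j by (simp_all add: algebra_simps)
  moreover have "(real k + 1) * ?x = (real k + 1) * real j - 1" by (simp add: field_simps)
  ultimately show ?thesis by (metis mult.assoc mult.commute)
qed

lemma mean_count_Suc: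
  assumes m: "m \<ge> 1"
  shows "mean_count k (Suc n) m * (1 + (real k + 1) * real n) =
     mean_count k n m * (1 + (real k + 1) * real n - ((real k + 1) * real m - 1))
   + (if m \<ge> 2 then mean_count k n (m - 1) * ((real k + 1) * real (m - 1) - 1) else 0)
   + (if m = 1 then 1 + (real k + 1) * real n else 0)"
proof -
  obtain j where mj: "m = Suc j" using m by (cases m) auto
  let ?W = "1 + (real k + 1) * real n"
  let ?V = "?W - ((real k + 1) * (real j + 1) - 1)"
  have "mean_count k (Suc n) m * ?W = prefactor k m * alt_sum j (\<lambda>l. qterm k (Suc n) l * ?W)"
    unfolding mean_count_def mj using alt_sum_cmult[of j ?W "qterm k (Suc n)"] by (simp add: mult_ac)
  also have "alt_sum j (\<lambda>l. qterm k (Suc n) l * ?W)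
             = ?V * alt_sum j (qterm k n) + (if j = 0 then ?W else 0)
               + (real k + 1) * (real j * alt_sum (j - 1) (qterm k n))"
    unfolding qterm_Suc[of k n _ j] alt_sum_add alt_sum_cmult alt_sum_const alt_sum_absorb
    by (cases "j = 0") simp_all
  also have "prefactor k m * (?V * alt_sum j (qterm k n) + (if j = 0 then ?W else 0)
             + (real k + 1) * (real j * alt_sum (j - 1) (qterm k n)))
    = mean_count k n m * ?V + (if j = 0 then ?W else 0)
      + (if j \<ge> 1 then mean_count k n j * ((real k + 1) * real j - 1) else 0)"
  proof (cases "j \<ge> 1")
    case True
    have "prefactor k m * ((real k + 1) * (real j * alt_sum (j - 1) (qterm k n)))
          = ((real k + 1) * real j * prefactor k (Suc j)) * alt_sum (j - 1) (qterm k n)"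
      by (simp add: mj mult_ac)
    also have "\<dots> = mean_count k n j * ((real k + 1) * real j - 1)"
      unfolding prefactor_step[OF True] mean_count_def by (simp add: mult_ac)
    finally show ?thesis using True mj unfolding mean_count_def[of k n m] by (simp add: algebra_simps)
  next
    case False
    hence "j = 0" by simp
    thus ?thesis by (simp add: mean_count_def mj prefactor_def)
  qed
  finally show ?thesis using mj by (simp add: algebra_simps)
qed

lemma desc_count_eq_mean_count:
  "m \<ge> 1 \<Longrightarrow> real (desc_count k n m) = mean_count k n m * real (card (oktrees k n))"
proof (induction n arbitrary: m)
  case 0
  thus ?case by (simp add: desc_count_def mean_count_def qterm_0 alt_sum_def)
next
  case (Suc n)
  let ?W = "1 + (real k + 1) * real n"
  let ?T = "real (card (oktrees k n))"
  have prev: "real (desc_count k n (m - 1)) = (if m \<ge> 2 then mean_count k n (m - 1) * ?T else 0)"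
    using Suc.IH[of "m - 1"] desc_count_0[of k n] by (cases "m \<ge> 2") auto
  have "real (desc_count k (Suc n) m) =
        ?T * (mean_count k n m * (?W - ((real k + 1) * real m - 1))
        + (if m \<ge> 2 then mean_count k n (m - 1) * ((real k + 1) * real (m - 1) - 1) else 0)
        + (if m = 1 then ?W else 0))"
    unfolding desc_count_Suc[OF Suc.prems] prev Suc.IH[OF Suc.prems] by (simp add: algebra_simps)
  also have "\<dots> = mean_count k (Suc n) m * real (card (oktrees k (Suc n)))"
    unfolding mean_count_Suc[OF Suc.prems, symmetric] card_oktrees_Suc by (simp add: algebra_simps)
  finally show ?case .
qed

lemma pmf_Xbar_mean_count:
  assumes n: "n \<ge> 1" and m: "m \<ge> 1"
  shows "pmf (Xbar k n) m = mean_count k n m / real n"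
  unfolding pmf_Xbar_desc_count[OF n] desc_count_eq_mean_count[OF m]
  using card_oktrees_pos[of k n] by simp

lemma mean_count_formula:
  "mean_count k n m / real n =
     ((real m - 1 - 1 / (real k + 1)) gchoose (m - 1))
       / (real n * ((real n - real k / (real k + 1)) gchoose n))
     * (\<Sum>l = 0..m - 1. real ((m - 1) choose l) * (-1) ^ l
           / ((real k + 1) * (real l + 1) + real k)
           * (((real n + 1 / (real k + 1)) gchoose n)
              - ((real n - real l - 2 + 2 / (real k + 1)) gchoose n)))"
proof -
  have G: "norm_binom k n > 0" by (rule norm_binom_pos)
  have summand: "real ((m - 1) choose l) * (-1) ^ l / ((real k + 1) * (real l + 1) + real k)
                   * (((real n + 1 / (real k + 1)) gchoose n)
                      - ((real n - real l - 2 + 2 / (real k + 1)) gchoose n))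
                 = norm_binom k n * (real ((m - 1) choose l) * (-1) ^ l * qterm k n l)" for l
  proof -
    have "(real n - real l - 2 + 2 / (real k + 1)) gchoose n = binom_ratio k n l * norm_binom k n"
      unfolding binom_ratio_def using G by simp
    thus ?thesis unfolding first_binom_eq qterm_def by (simp add: algebra_simps)
  qed
  show ?thesis
    unfolding summand sum_distrib_left[symmetric] mean_count_def alt_sum_def atLeast0AtMost
      prefactor_def[symmetric] norm_binom_def[symmetric]
    using G by (simp add: field_simps)
qed


section \<open>The limit of the point probabilities\<close>

text \<open>For n > l the binomial ratio does not grow: its recurrence factor lies in [0, 1].\<close>
lemma binom_ratio_step_le:
  assumes n: "n \<ge> Suc l"
  shows "\<bar>binom_ratio k (Suc n) l\<bar> \<le> \<bar>binom_ratio k n l\<bar>"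
proof -
  define a where "a = real k + 1"
  define W where "W = 1 + a * real n"
  define r where "r = a * (real n - real l - 1) + 2"
  have a: "a \<ge> 1" unfolding a_def by simp
  have W: "W > 0" unfolding W_def using a by (simp add: add_pos_nonneg)
  have r0: "r \<ge> 0" unfolding r_def using a n by simp
  have "1 * 1 \<le> a * (real l + 1)" using a by (intro mult_mono) auto
  hence rW: "r \<le> W" unfolding r_def W_def by (simp add: algebra_simps)
  have "\<bar>binom_ratio k (Suc n) l\<bar> * W = \<bar>binom_ratio k n l\<bar> * r"
    using arg_cong[OF binom_ratio_Suc[of k n l], of abs] W r0
    unfolding W_def r_def a_def by (simp add: abs_mult)
  also have "\<dots> \<le> \<bar>binom_ratio k n l\<bar> * W" using rW by (simp add: mult_left_mono)
  finally show ?thesis using W by simp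
qed

lemma binom_ratio_bounded: "\<exists>M. \<forall>n. \<bar>binom_ratio k n l\<bar> \<le> M"
proof -
  define M where "M = Max ((\<lambda>j. \<bar>binom_ratio k j l\<bar>) ` {..Suc l})"
  have "\<bar>binom_ratio k n l\<bar> \<le> M" for n
  proof (induction n)
    case (Suc n)
    show ?case
    proof (cases "Suc n \<le> Suc l")
      case False
      thus ?thesis using binom_ratio_step_le[of l n k] Suc.IH by linarith
    qed (simp add: M_def)
  qed (simp add: M_def)
  thus ?thesis by blast
qed

lemma qterm_over_n:
  "(\<lambda>n. qterm k n l / real n) \<longlonglongrightarrow> (real k + 1) / ((real k + 1) * (real l + 1) + real k)"
proof -
  let ?c = "(real k + 1) * (real l + 1) + real k"
  have c: "?c > 0" by (simp add: add_pos_nonneg)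
  obtain M where M: "\<And>n. \<bar>binom_ratio k n l\<bar> \<le> M" using binom_ratio_bounded by blast
  have ratio: "(\<lambda>n. binom_ratio k n l / real n) \<longlonglongrightarrow> 0"
  proof (rule Lim_null_comparison)
    show "\<forall>\<^sub>F n in sequentially. norm (binom_ratio k n l / real n) \<le> M / real n"
      using M by (auto simp: divide_right_mono abs_divide)
  qed (rule lim_const_over_n)
  have W: "(\<lambda>n. (1 + (real k + 1) * real n) / real n) \<longlonglongrightarrow> real k + 1"
  proof -
    have "(\<lambda>n. (real k + 1) + 1 / real n) \<longlonglongrightarrow> real k + 1"
      using tendsto_add[OF tendsto_const lim_const_over_n] by simp
    moreover have "\<forall>\<^sub>F n in sequentially. (real k + 1) + 1 / real n = (1 + (real k + 1) * real n) / real n"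
      using eventually_ge_at_top[of 1] by eventually_elim (simp add: field_simps)
    ultimately show ?thesis by (rule Lim_transform_eventually)
  qed
  have "(\<lambda>n. ((1 + (real k + 1) * real n) / real n - binom_ratio k n l / real n) / ?c)
        \<longlonglongrightarrow> ((real k + 1) - 0) / ?c"
    using W ratio c by (intro tendsto_intros) auto
  moreover have "((1 + (real k + 1) * real n) / real n - binom_ratio k n l / real n) / ?c = qterm k n l / real n"
    for n unfolding qterm_def by (simp add: diff_divide_distrib mult.commute)
  ultimately show ?thesis by simp
qed

lemma prefactor_alt_sum_limit:
  assumes k: "k \<ge> 1" and m: "m \<ge> 1"
  shows "prefactor k m * alt_sum (m - 1) (\<lambda>l. (real k + 1) / ((real k + 1) * (real l + 1) + real k))
       = real k / ((real k + 1) * (real m + real k / (real k + 1)) * (real m - 1 / (real k + 1)))"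
proof -
  define a where "a = real k + 1"
  define d where "d = 1 - 1 / a"
  obtain j where mj: "m = Suc j" using m by (cases m) auto
  have a: "a \<ge> 2" "real k = a - 1" unfolding a_def using k by auto
  have d: "d > 0" unfolding d_def using a by (simp add: field_simps)
  have "(\<lambda>l. (real k + 1) / ((real k + 1) * (real l + 1) + real k)) = (\<lambda>l. 1 / (real l + (d + 1)))"
    unfolding d_def a_def[symmetric] a(2) using a by (simp add: field_simps)
  hence S: "alt_sum (m - 1) (\<lambda>l. (real k + 1) / ((real k + 1) * (real l + 1) + real k))
            = fact j / pochhammer (d + 1) (Suc j)"
    using alt_sum_reciprocal[of "d + 1" j] d mj by simp
  have C: "prefactor k m = pochhammer d j / fact j"
    unfolding prefactor_def gbinomial_pochhammer' mj d_def a_def by (simp add: algebra_simps)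
  define P where "P = pochhammer (d + 1) j"
  define F where "F = (fact j :: real)"
  define D1 where "D1 = d + real j"
  define D2 where "D2 = d + 1 + real j"
  have pos: "P > 0" "F > 0" "D1 > 0" "D2 > 0"
    unfolding P_def F_def D1_def D2_def using d by (auto intro: pochhammer_pos)
  have "pochhammer d j * D1 = d * P"
    using pochhammer_rec[of d j] pochhammer_rec'[of d j] unfolding P_def D1_def by (simp add: mult.commute)
  hence "pochhammer d j = d * P / D1" using pos by (simp add: field_simps)
  hence "prefactor k m * (fact j / pochhammer (d + 1) (Suc j)) = (d * P / D1 / F) * (F / (D2 * P))"
    unfolding C pochhammer_rec'[of "d + 1" j] P_def F_def D2_def by simp
  also have "\<dots> = d / (D1 * D2)" using pos by (simp add: field_simps)
  also have "\<dots> = real k / ((real k + 1) * (real m + real k / (real k + 1)) * (real m - 1 / (real k + 1)))"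
    unfolding D1_def D2_def a_def[symmetric] a(2) d_def mj using a by (simp add: field_simps)
  finally show ?thesis unfolding S .
qed

lemma pmf_Xbar_limit:
  assumes k: "k \<ge> 1" and m: "m \<ge> 1"
  shows "(\<lambda>n. pmf (Xbar k n) m)
         \<longlonglongrightarrow> real k / ((real k + 1) * (real m + real k / (real k + 1)) * (real m - 1 / (real k + 1)))"
proof -
  have "(\<lambda>n. prefactor k m * alt_sum (m - 1) (\<lambda>l. qterm k n l / real n))
        \<longlonglongrightarrow> prefactor k m * alt_sum (m - 1) (\<lambda>l. (real k + 1) / ((real k + 1) * (real l + 1) + real k))"
    unfolding alt_sum_def by (intro tendsto_intros qterm_over_n)
  moreover have "\<forall>\<^sub>F n in sequentially.
                   prefactor k m * alt_sum (m - 1) (\<lambda>l. qterm k n l / real n) = pmf (Xbar k n) m"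
    using eventually_ge_at_top[of 1]
  proof eventually_elim
    case (elim n)
    have "alt_sum (m - 1) (\<lambda>l. qterm k n l / real n) = alt_sum (m - 1) (qterm k n) / real n"
      using alt_sum_cmult[of "m - 1" "1 / real n" "qterm k n"] by simp
    thus ?case using pmf_Xbar_mean_count[OF elim m] unfolding mean_count_def by simp
  qed
  ultimately show ?thesis unfolding prefactor_alt_sum_limit[OF k m]
    by (rule Lim_transform_eventually)
qed

section \<open>The limit distribution and weak convergence\<close>

definition limit_pmf :: "nat \<Rightarrow> nat \<Rightarrow> real" where
  "limit_pmf k m = (if m = 0 then 0 else
     real k / ((real k + 1) * (real m + real k / (real k + 1)) * (real m - 1 / (real k + 1))))"

lemma limit_pmf_nonneg: "limit_pmf k m \<ge> 0"
proof -
  have "1 / (real k + 1) \<le> 1" by simp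
  hence "real m - 1 / (real k + 1) \<ge> 0" if "m \<noteq> 0" using that by linarith
  thus ?thesis unfolding limit_pmf_def by simp
qed

text \<open>The limit probabilities telescope: with d = k/(k+1) they are d/((j+d)(j+1+d)).\<close>
lemma limit_pmf_sums:
  assumes k: "k \<ge> 1"
  shows "limit_pmf k sums 1"
proof -
  define a where "a = real k + 1"
  define d where "d = 1 - 1 / a"
  define g where "g j = inverse (real j + d)" for j :: nat
  have a: "a \<ge> 2" "real k = a - 1" unfolding a_def using k by auto
  have d: "d > 0" unfolding d_def using a by (simp add: field_simps)
  have "filterlim (\<lambda>j. d + real j) at_top sequentially"
    by (rule filterlim_tendsto_add_at_top[OF tendsto_const filterlim_real_sequentially])
  hence "g \<longlonglongrightarrow> 0" unfolding g_def using tendsto_inverse_0_at_top by (simp add: add.commute)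
  hence "(\<lambda>j. d * (g j - g (Suc j))) sums (d * (g 0 - 0))"
    by (intro sums_mult telescope_sums')
  moreover have "d * (g 0 - 0) = 1" unfolding g_def using d by simp
  moreover have "d * (g j - g (Suc j)) = limit_pmf k (Suc j)" for j
  proof -
    have "real j + d > 0" "real j + 1 + d > 0" using d by simp_all
    hence "g j - g (Suc j) = 1 / ((real j + d) * (real j + 1 + d))"
      unfolding g_def by (simp add: field_simps)
    moreover have "limit_pmf k (Suc j) = d / ((real j + d) * (real j + 1 + d))"
      unfolding limit_pmf_def a_def[symmetric] a(2) d_def using a by (simp add: field_simps)
    ultimately show ?thesis by simp
  qed
  ultimately have "(\<lambda>j. limit_pmf k (Suc j)) sums 1" by simp
  thus ?thesis unfolding sums_Suc_iff by (simp add: limit_pmf_def)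
qed

lemma cdf_distr_pmf:
  "cdf (distr (measure_pmf P) borel real) x = (\<Sum>m\<in>{m. real m \<le> x}. pmf P m)"
proof -
  have "{m::nat. real m \<le> x} \<subseteq> {..nat \<lceil>x\<rceil>}"
  proof
    fix m assume "m \<in> {m::nat. real m \<le> x}"
    hence "real m \<le> real_of_int \<lceil>x\<rceil>" using le_of_int_ceiling order_trans by blast
    hence "int m \<le> \<lceil>x\<rceil>" by linarith
    thus "m \<in> {..nat \<lceil>x\<rceil>}" by simp
  qed
  hence fin: "finite {m::nat. real m \<le> x}" using finite_subset by blast
  have "cdf (distr (measure_pmf P) borel real) x = measure (distr (measure_pmf P) borel real) {..x}"
    by (simp add: cdf_def)
  also have "\<dots> = measure (measure_pmf P) (real -` {..x} \<inter> space (measure_pmf P))"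
    by (rule measure_distr) auto
  also have "real -` {..x} \<inter> space (measure_pmf P) = {m. real m \<le> x}" by auto
  finally show ?thesis using measure_measure_pmf_finite[OF fin] by simp
qed

text \<open>For distributions on the naturals, pointwise convergence of the point probabilities
  implies convergence of the distribution functions (each is a finite sum).\<close>
lemma weak_conv_of_pmf_convergence:
  assumes "\<And>m. (\<lambda>n. pmf (P n) m) \<longlonglongrightarrow> pmf Q m"
  shows "weak_conv_m (\<lambda>n. distr (measure_pmf (P n)) borel real) (distr (measure_pmf Q) borel real)"
  unfolding weak_conv_m_def weak_conv_def cdf_distr_pmf using assms by (intro allI impI tendsto_sum)

lemma Xbar_weak_convergence:
  assumes k: "k \<ge> 1"
  shows "\<exists>X :: nat pmf.
            (\<forall>m \<ge> 1. pmf X m = real k /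
               ((real k + 1) * (real m + real k / (real k + 1)) * (real m - 1 / (real k + 1))))
          \<and> weak_conv_m (\<lambda>n. distr (measure_pmf (Xbar k n)) borel real)
                        (distr (measure_pmf X) borel real)"
proof -
  have "(\<integral>\<^sup>+m. ennreal (limit_pmf k m) \<partial>count_space UNIV) = ennreal (\<Sum>m. limit_pmf k m)"
    unfolding nn_integral_count_space_nat using limit_pmf_sums[OF k] limit_pmf_nonneg
    by (intro suminf_ennreal2) (auto simp: sums_summable)
  hence "(\<integral>\<^sup>+m. ennreal (limit_pmf k m) \<partial>count_space UNIV) = 1"
    using limit_pmf_sums[OF k] by (simp add: sums_iff)
  then obtain X :: "nat pmf" where X: "\<And>m. pmf X m = limit_pmf k m"
    using pmf_embed_pmf[of "limit_pmf k", OF limit_pmf_nonneg] by blast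
  have "(\<lambda>n. pmf (Xbar k n) m) \<longlonglongrightarrow> pmf X m" for m
  proof (cases "m = 0")
    case True
    have "\<forall>\<^sub>F n in sequentially. pmf (Xbar k n) m = 0"
      using eventually_ge_at_top[of 1]
      by eventually_elim (simp add: True pmf_Xbar_desc_count desc_count_0)
    thus ?thesis using X True by (simp add: limit_pmf_def tendsto_eventually)
  qed (use X pmf_Xbar_limit[OF k] in \<open>simp add: limit_pmf_def\<close>)
  hence "weak_conv_m (\<lambda>n. distr (measure_pmf (Xbar k n)) borel real) (distr (measure_pmf X) borel real)"
    by (rule weak_conv_of_pmf_convergence)
  thus ?thesis using X by (intro exI[of _ X]) (simp add: limit_pmf_def)
qed

theorem theorem6:
  fixes k :: nat
  assumes "k \<ge> 1"
  shows "(\<forall>n m. n \<ge> 1 \<longrightarrow> m \<ge> 1 \<longrightarrow>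
           pmf (Xbar k n) m =
             ((real m - 1 - 1 / (real k + 1)) gchoose (m - 1))
               / (real n * ((real n - real k / (real k + 1)) gchoose n))
             * (\<Sum>l = 0..m - 1. real ((m - 1) choose l) * (-1) ^ l
                   / ((real k + 1) * (real l + 1) + real k)
                   * (((real n + 1 / (real k + 1)) gchoose n)
                      - ((real n - real l - 2 + 2 / (real k + 1)) gchoose n))))
       \<and> (\<exists>X :: nat pmf.
            (\<forall>m \<ge> 1. pmf X m = real k /
               ((real k + 1) * (real m + real k / (real k + 1)) * (real m - 1 / (real k + 1))))
          \<and> weak_conv_m (\<lambda>n. distr (measure_pmf (Xbar k n)) borel real)
                        (distr (measure_pmf X) borel real))"
proof (intro conjI allI impI)
  fix n m :: nat
  assume n: "n \<ge> 1" and m: "m \<ge> 1"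
  show "pmf (Xbar k n) m =
             ((real m - 1 - 1 / (real k + 1)) gchoose (m - 1))
               / (real n * ((real n - real k / (real k + 1)) gchoose n))
             * (\<Sum>l = 0..m - 1. real ((m - 1) choose l) * (-1) ^ l
                   / ((real k + 1) * (real l + 1) + real k)
                   * (((real n + 1 / (real k + 1)) gchoose n)
                      - ((real n - real l - 2 + 2 / (real k + 1)) gchoose n)))"
    unfolding pmf_Xbar_mean_count[OF n m] by (rule mean_count_formula)
qed (rule Xbar_weak_convergence[OF assms])

end
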